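(* Let $p$ be as in the context and $p^*$ the associated dual function. Define for $\xi\in\mathbb R^n\setminus0$ $$\psi(\xi)=p(\xi)\frac{\nabla p(\xi)}{|\nabla p(\xi)|},\qquad \phi(\xi)=|\xi|\,\nabla p^*(\xi).$$ Then $\psi:\mathbb R^n\setminus0\to\mathbb R^n\setminus0$ is a $C^\infty$-diffeomorphism and $\phi=\psi^{-1}$.
   Context: $p\in C^\infty(\mathbb R^n\setminus0)$ ($n\ge2$) is positive, positively homogeneous of degree 1, and the Gaussian curvature of $\Sigma_p=\{p=1\}$ never vanishes. $p^*\in C^\infty(\mathbb R^n\setminus0)$ is the positive, degree-1 positively homogeneous function with $\{p^*=1\}=\{\nabla p(\xi):p(\xi)=1\}$ (equivalently $p^*(\nabla p(\xi))=1$ for $\xi\ne0$; it satisfies $\nabla p^*(\nabla p(\xi))=\xi/p(\xi)$ and $\nabla p(\nabla p^*(\xi))=\xi/p^*(\xi)$). *)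

theory Defs
  imports "HOL-Analysis.Analysis"
begin

text \<open>C-infinity on an open set, for functions between finite-dimensional spaces:
  f is differentiable at every point of S, and every directional-derivative
  function x |-> Df(x) v is again C-infinity on S (greatest such predicate).\<close>
coinductive smooth_on :: "'a::real_normed_vector set \<Rightarrow> ('a \<Rightarrow> 'b::real_normed_vector) \<Rightarrow> bool"
  for S :: "'a set" where
  "\<lbrakk>\<forall>x\<in>S. f differentiable (at x);
    \<forall>v. smooth_on S (\<lambda>x. frechet_derivative f (at x) v)\<rbrakk> \<Longrightarrow> smooth_on S f"

definition diffeo_on :: "'a::real_normed_vector set \<Rightarrow> 'b::real_normed_vector set \<Rightarrow> ('a \<Rightarrow> 'b) \<Rightarrow> bool" where
  "diffeo_on S T f \<longleftrightarrow> bij_betw f S T \<and> smooth_on S f \<and> smooth_on T (inv_into S f)"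

definition grad :: "(real^'n \<Rightarrow> real) \<Rightarrow> real^'n \<Rightarrow> real^'n" where
  "grad f x = (\<chi> i. frechet_derivative f (at x) (axis i 1))"

definition hessian :: "(real^'n \<Rightarrow> real) \<Rightarrow> real^'n \<Rightarrow> real^'n^'n" where
  "hessian f x = (\<chi> i j. frechet_derivative (\<lambda>y. grad f y $ i) (at x) (axis j 1))"

definition pos_homogeneous1 :: "(real^'n \<Rightarrow> real) \<Rightarrow> bool" where
  "pos_homogeneous1 f \<longleftrightarrow> (\<forall>t>0. \<forall>x. x \<noteq> 0 \<longrightarrow> f (t *\<^sub>R x) = t * f x)"

text \<open>Gaussian curvature of the level set {F = c} at a regular point x
  (bordered-Hessian formula for implicitly defined hypersurfaces in R^n):
  K = - det [[Hess F, grad F],[grad F^T, 0]] / |grad F|^(n+1).\<close>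
definition bordered_hessian :: "(real^'n \<Rightarrow> real) \<Rightarrow> real^'n \<Rightarrow> real^('n option)^('n option)" where
  "bordered_hessian F x = (\<chi> a b. case (a, b) of
      (Some i, Some j) \<Rightarrow> hessian F x $ i $ j
    | (Some i, None) \<Rightarrow> grad F x $ i
    | (None, Some j) \<Rightarrow> grad F x $ j
    | (None, None) \<Rightarrow> 0)"

definition level_gauss_curvature :: "(real^'n \<Rightarrow> real) \<Rightarrow> real^'n \<Rightarrow> real" where
  "level_gauss_curvature F x = - det (bordered_hessian F x) / norm (grad F x) ^ (CARD('n) + 1)"

end

theory Submission
  imports Defs
begin

text \<open>The map \<psi> rescales the Gauss map \<xi> \<mapsto> \<nabla>p(\<xi>) of the level sets of p so that
  |\<psi>(\<xi>)| = p(\<xi>). The duality hypothesis says pstar \<circ> \<nabla>p = 1, and differentiating it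
  shows that \<nabla>pstar(\<nabla>p(\<xi>)) lies in the left kernel of the Hessian of p at \<xi>; by Euler's
  relation so does \<xi>, and both have inner product 1 with \<nabla>p(\<xi>) when p(\<xi>) = 1. Their
  difference is thus annihilated by the bordered Hessian, whose determinant is the curvature, so
  \<nabla>pstar(\<nabla>p(\<xi>)) = \<xi> on {p = 1}, and by homogeneity \<phi> \<circ> \<psi> = id everywhere. The
  duality hypothesis also makes \<psi> onto, and smoothness of \<psi> and \<phi> comes from the closure
  of smooth functions under sums, products and powers of positive functions.\<close>

section \<open>Smooth functions\<close>

lemma smooth_on_differentiable: "smooth_on S f \<Longrightarrow> x \<in> S \<Longrightarrow> f differentiable (at x)"
  by (erule smooth_on.cases) auto

lemma smooth_on_frechet_derivative:
  "smooth_on S f \<Longrightarrow> smooth_on S (\<lambda>x. frechet_derivative f (at x) v)"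
  by (erule smooth_on.cases) auto

lemma differentiable_transform_within_open:
  assumes "g differentiable (at x)" "open S" "x \<in> S" "\<And>y. y \<in> S \<Longrightarrow> f y = g y"
  shows "f differentiable (at x)"
  by (metis assms differentiableI frechet_derivative_works has_derivative_transform_within_open)

definition derivatives_in :: "'a::real_normed_vector set \<Rightarrow> ('a \<Rightarrow> 'b) set \<Rightarrow> ('a \<Rightarrow> 'b::real_normed_vector) \<Rightarrow> bool"
  where "derivatives_in S B f \<longleftrightarrow> (\<forall>x\<in>S. f differentiable (at x)) \<and>
    (\<forall>v. \<exists>g\<in>B. \<forall>x\<in>S. frechet_derivative f (at x) v = g x)"

lemma smooth_on_derivatives_closed:
  assumes "open S" and closed: "\<And>g. g \<in> B \<Longrightarrow> derivatives_in S B g"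
    and "g \<in> B" "\<And>x. x \<in> S \<Longrightarrow> f x = g x"
  shows "smooth_on S f"
proof -
  define Q where "Q f \<longleftrightarrow> (\<exists>g\<in>B. \<forall>x\<in>S. f x = g x)" for f
  have "Q f" using assms(3,4) by (auto simp: Q_def)
  then show ?thesis
  proof (coinduction arbitrary: f rule: smooth_on.coinduct)
    case (smooth_on f)
    then obtain g where g: "g \<in> B" "\<And>x. x \<in> S \<Longrightarrow> f x = g x" by (auto simp: Q_def)
    have g_diff: "\<forall>x\<in>S. g differentiable (at x)" using closed[OF g(1)] by (simp add: derivatives_in_def)
    have f_diff: "f differentiable (at x)" if "x \<in> S" for x
      using differentiable_transform_within_open g g_diff that assms(1) by metis
    have "Q (\<lambda>x. frechet_derivative f (at x) v)" for v
    proof -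
      obtain h where "h \<in> B" "\<forall>x\<in>S. frechet_derivative g (at x) v = h x"
        using closed[OF g(1)] unfolding derivatives_in_def by blast
      moreover have "frechet_derivative f (at x) = frechet_derivative g (at x)" if "x \<in> S" for x
        using frechet_derivative_transform_within_open[OF f_diff[OF that] assms(1) that] g(2) by blast
      ultimately show ?thesis by (auto simp: Q_def)
    qed
    then show ?case using f_diff by blast
  qed
qed

lemma derivatives_in_smooth_on: "smooth_on S f \<Longrightarrow> derivatives_in S {f. smooth_on S f} f"
  by (auto simp: derivatives_in_def intro: smooth_on_differentiable smooth_on_frechet_derivative)

lemma smooth_on_transform:
  "open S \<Longrightarrow> smooth_on S g \<Longrightarrow> (\<And>x. x \<in> S \<Longrightarrow> f x = g x) \<Longrightarrow> smooth_on S f"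
  by (rule smooth_on_derivatives_closed[where B="{f. smooth_on S f}"]) (auto intro: derivatives_in_smooth_on)

inductive_set poly_closure :: "('a \<Rightarrow> real) set \<Rightarrow> ('a \<Rightarrow> real) set" for A where
  atom: "a \<in> A \<Longrightarrow> a \<in> poly_closure A"
| const: "(\<lambda>x. c) \<in> poly_closure A"
| add: "f \<in> poly_closure A \<Longrightarrow> g \<in> poly_closure A \<Longrightarrow> (\<lambda>x. f x + g x) \<in> poly_closure A"
| mult: "f \<in> poly_closure A \<Longrightarrow> g \<in> poly_closure A \<Longrightarrow> (\<lambda>x. f x * g x) \<in> poly_closure A"

lemma derivatives_in_add:
  fixes f g :: "'a::real_normed_vector \<Rightarrow> 'b::real_normed_vector"
  assumes f: "derivatives_in S B f" and g: "derivatives_in S B g"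
    and B_add: "\<And>u w. u \<in> B \<Longrightarrow> w \<in> B \<Longrightarrow> (\<lambda>x. u x + w x) \<in> B"
  shows "derivatives_in S B (\<lambda>x. f x + g x)"
  unfolding derivatives_in_def
proof (intro conjI allI)
  show "\<forall>x\<in>S. (\<lambda>x. f x + g x) differentiable (at x)"
    using f g by (auto simp: derivatives_in_def)
  fix v
  obtain u w where "u \<in> B" "w \<in> B"
    "\<forall>x\<in>S. frechet_derivative f (at x) v = u x" "\<forall>x\<in>S. frechet_derivative g (at x) v = w x"
    using f g unfolding derivatives_in_def by meson
  moreover have "frechet_derivative (\<lambda>x. f x + g x) (at x) =
      (\<lambda>v. frechet_derivative f (at x) v + frechet_derivative g (at x) v)" if "x \<in> S" for x
    using f g that
    by (intro frechet_derivative_at[symmetric] has_derivative_add)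
      (auto simp: derivatives_in_def frechet_derivative_works)
  ultimately show "\<exists>q\<in>B. \<forall>x\<in>S. frechet_derivative (\<lambda>x. f x + g x) (at x) v = q x"
    by (intro bexI[of _ "\<lambda>x. u x + w x"] B_add) auto
qed

lemma derivatives_in_mult:
  fixes f g :: "'a::real_normed_vector \<Rightarrow> real"
  assumes f: "derivatives_in S B f" "f \<in> B" and g: "derivatives_in S B g" "g \<in> B"
    and B_add: "\<And>u w. u \<in> B \<Longrightarrow> w \<in> B \<Longrightarrow> (\<lambda>x. u x + w x) \<in> B"
    and B_mult: "\<And>u w. u \<in> B \<Longrightarrow> w \<in> B \<Longrightarrow> (\<lambda>x. u x * w x) \<in> B"
  shows "derivatives_in S B (\<lambda>x. f x * g x)"
  unfolding derivatives_in_def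
proof (intro conjI allI)
  show "\<forall>x\<in>S. (\<lambda>x. f x * g x) differentiable (at x)"
    using f g by (auto simp: derivatives_in_def)
  fix v
  obtain u w where "u \<in> B" "w \<in> B"
    "\<forall>x\<in>S. frechet_derivative f (at x) v = u x" "\<forall>x\<in>S. frechet_derivative g (at x) v = w x"
    using f g unfolding derivatives_in_def by meson
  moreover have "frechet_derivative (\<lambda>x. f x * g x) (at x) =
      (\<lambda>v. f x * frechet_derivative g (at x) v + frechet_derivative f (at x) v * g x)" if "x \<in> S" for x
    using f g that
    by (intro frechet_derivative_at[symmetric] has_derivative_mult)
      (auto simp: derivatives_in_def frechet_derivative_works)
  ultimately show "\<exists>q\<in>B. \<forall>x\<in>S. frechet_derivative (\<lambda>x. f x * g x) (at x) v = q x"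
    using f(2) g(2) by (intro bexI[of _ "\<lambda>x. f x * w x + u x * g x"] B_add B_mult) auto
qed

lemma derivatives_in_poly_closure:
  assumes "\<And>a. a \<in> A \<Longrightarrow> derivatives_in S (poly_closure A) a" "f \<in> poly_closure A"
  shows "derivatives_in S (poly_closure A) f"
  using assms(2)
proof induction
  case (atom a)
  then show ?case by (rule assms(1))
next
  case (const c)
  then show ?case
    by (auto simp: derivatives_in_def intro!: bexI[of _ "\<lambda>x. 0"] poly_closure.const)
next
  case (add f g)
  then show ?case by (intro derivatives_in_add poly_closure.add)
next
  case (mult f g)
  then show ?case by (intro derivatives_in_mult poly_closure.add poly_closure.mult)
qed

lemma smooth_on_poly_closure:
  assumes "open S" "\<And>a. a \<in> A \<Longrightarrow> derivatives_in S (poly_closure A) a"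
    "f \<in> poly_closure A"
  shows "smooth_on S f"
  by (rule smooth_on_derivatives_closed[OF assms(1) derivatives_in_poly_closure assms(3)])
    (use assms(2) in auto)

lemma derivatives_inI:
  assumes "\<And>x. x \<in> S \<Longrightarrow> (f has_derivative f' x) (at x)" "\<And>v. (\<lambda>x. f' x v) \<in> B"
  shows "derivatives_in S B f"
proof -
  have "frechet_derivative f (at x) v = f' x v" if "x \<in> S" for x v
    using frechet_derivative_at[OF assms(1)[OF that]] by simp
  moreover have "f differentiable (at x)" if "x \<in> S" for x
    using assms(1)[OF that] by (rule differentiableI)
  ultimately show ?thesis
    unfolding derivatives_in_def using assms(2) by (metis (no_types, lifting))
qed

lemma derivatives_in_mono: "B \<subseteq> C \<Longrightarrow> derivatives_in S B f \<Longrightarrow> derivatives_in S C f"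
  unfolding derivatives_in_def by blast

lemma smooth_on_poly_closure_smooth:
  assumes "open S" "f \<in> poly_closure {f. smooth_on S f}"
  shows "smooth_on S f"
proof (rule smooth_on_poly_closure[OF assms(1) _ assms(2)])
  show "derivatives_in S (poly_closure {f. smooth_on S f}) a" if "a \<in> {f. smooth_on S f}" for a
    using that by (intro derivatives_in_mono[OF _ derivatives_in_smooth_on]) (auto intro: poly_closure.atom)
qed

lemma smooth_on_const: "open S \<Longrightarrow> smooth_on S (\<lambda>x. c :: real)"
  by (rule smooth_on_poly_closure_smooth) (auto intro: poly_closure.const)

lemma smooth_on_add:
  "open S \<Longrightarrow> smooth_on S f \<Longrightarrow> smooth_on S g \<Longrightarrow> smooth_on S (\<lambda>x. f x + g x :: real)"
  by (rule smooth_on_poly_closure_smooth) (auto intro: poly_closure.add poly_closure.atom)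

lemma smooth_on_mult:
  "open S \<Longrightarrow> smooth_on S f \<Longrightarrow> smooth_on S g \<Longrightarrow> smooth_on S (\<lambda>x. f x * g x :: real)"
  by (rule smooth_on_poly_closure_smooth) (auto intro: poly_closure.mult poly_closure.atom)

lemma smooth_on_sum:
  "finite I \<Longrightarrow> open S \<Longrightarrow> (\<And>i. i \<in> I \<Longrightarrow> smooth_on S (f i)) \<Longrightarrow>
    smooth_on S (\<lambda>x. \<Sum>i\<in>I. f i x :: real)"
  by (induction I rule: finite_induct) (auto intro: smooth_on_const smooth_on_add)

text \<open>The derivative of g powr s is s * g powr (s - 1) times that of g, so adjoining all
  powers of positive smooth functions to the generators keeps the algebra closed under
  differentiation.\<close>

lemma smooth_on_powr:
  fixes f :: "'a::real_normed_vector \<Rightarrow> real"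
  assumes "open S" "smooth_on S f" "\<And>x. x \<in> S \<Longrightarrow> f x > 0"
  shows "smooth_on S (\<lambda>x. f x powr r)"
proof -
  define A where "A = {f. smooth_on S f} \<union>
    {(\<lambda>x. g x powr s) | (g :: 'a \<Rightarrow> real) s. smooth_on S g \<and> (\<forall>x\<in>S. g x > 0)}"
  have "derivatives_in S (poly_closure A) a" if "a \<in> A" for a
  proof (cases "smooth_on S a")
    case True
    have "{f. smooth_on S f} \<subseteq> poly_closure A"
      by (auto simp: A_def intro: poly_closure.atom)
    then show ?thesis
      using derivatives_in_mono derivatives_in_smooth_on[OF True] by blast
  next
    case False
    then obtain g s where a: "a = (\<lambda>x. g x powr s)" and g: "smooth_on S g" "\<forall>x\<in>S. g x > 0"
      using \<open>a \<in> A\<close> by (auto simp: A_def)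
    have deriv: "(a has_derivative (\<lambda>v. s * (g x powr (s - 1) * frechet_derivative g (at x) v))) (at x)"
      if "x \<in> S" for x
    proof -
      have g': "(g has_derivative frechet_derivative g (at x)) (at x within UNIV)"
        using smooth_on_differentiable[OF g(1) that] frechet_derivative_works by blast
      have gx: "g x > 0" using g(2) that by blast
      have "((\<lambda>x. g x powr s) has_derivative
          (\<lambda>v. g x powr s * (frechet_derivative g (at x) v * s / g x))) (at x)"
        using has_derivative_powr[OF g' has_derivative_const[of s] gx UNIV_I] by simp
      then show ?thesis
        unfolding a by (rule has_derivative_eq_rhs) (use gx in \<open>auto simp: powr_diff\<close>)
    qed
    have "(\<lambda>x. s * (g x powr (s - 1) * frechet_derivative g (at x) v)) \<in> poly_closure A" for v
      using g
      by (intro poly_closure.mult poly_closure.const poly_closure.atom)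
        (auto simp: A_def intro: smooth_on_frechet_derivative)
    then show ?thesis
      using deriv by (intro derivatives_inI)
  qed
  moreover have "(\<lambda>x. f x powr r) \<in> poly_closure A"
    using assms by (intro poly_closure.atom) (auto simp: A_def)
  ultimately show ?thesis
    using smooth_on_poly_closure[OF assms(1)] by blast
qed

lemma smooth_on_bounded_linear:
  assumes "open S" "bounded_linear L"
  shows "smooth_on S L"
proof (rule smooth_on_derivatives_closed[OF assms(1)])
  let ?B = "{F. (\<exists>c. F = (\<lambda>x. c)) \<or> bounded_linear F}"
  show "L \<in> ?B" using assms(2) by blast
  show "derivatives_in S ?B F" if "F \<in> ?B" for F
  proof (rule derivatives_inI)
    show "(F has_derivative (if bounded_linear F then F else (\<lambda>v. 0))) (at x)" for x
      using that by (auto intro: bounded_linear_imp_has_derivative)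
    show "(\<lambda>x. (if bounded_linear F then F else (\<lambda>v. 0)) v) \<in> ?B" for v
      by auto
  qed
qed simp

lemma smooth_on_bounded_linear_compose:
  assumes "open S" "bounded_linear L" "smooth_on S F"
  shows "smooth_on S (\<lambda>x. L (F x))"
proof (rule smooth_on_derivatives_closed[OF assms(1)])
  let ?B = "{(\<lambda>x. L (F x)) | F. smooth_on S F}"
  show "(\<lambda>x. L (F x)) \<in> ?B" using assms(3) by blast
  show "derivatives_in S ?B G" if "G \<in> ?B" for G
  proof -
    obtain F where G: "G = (\<lambda>x. L (F x))" and F: "smooth_on S F" using \<open>G \<in> ?B\<close> by blast
    have "(G has_derivative (\<lambda>v. L (frechet_derivative F (at x) v))) (at x)" if "x \<in> S" for x
      unfolding G
      using bounded_linear.has_derivative[OF assms(2)] smooth_on_differentiable[OF F that]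
      by (simp add: frechet_derivative_works)
    then show ?thesis
      using F by (intro derivatives_inI) (auto intro: smooth_on_frechet_derivative)
  qed
qed simp

lemma smooth_on_vec_nth: "open S \<Longrightarrow> smooth_on S F \<Longrightarrow> smooth_on S (\<lambda>x. F x $ i)"
  by (rule smooth_on_bounded_linear_compose[OF _ bounded_linear_vec_nth])

lemma has_derivative_vec_lambda:
  fixes F :: "'a::real_normed_vector \<Rightarrow> real^'n"
  assumes "\<And>i. ((\<lambda>x. F x $ i) has_derivative F' i) (at x)"
  shows "(F has_derivative (\<lambda>v. \<chi> i. F' i v)) (at x)"
  using assms
  by (auto simp: has_derivative_componentwise_within[of F] Basis_vec_def cart_eq_inner_axis[symmetric])

lemma smooth_on_vec:
  fixes F :: "'a::real_normed_vector \<Rightarrow> real^'n"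
  assumes "open S" "\<And>i. smooth_on S (\<lambda>x. F x $ i)"
  shows "smooth_on S F"
proof (rule smooth_on_derivatives_closed[OF assms(1)])
  let ?B = "{F :: 'a \<Rightarrow> real^'n. \<forall>i. smooth_on S (\<lambda>x. F x $ i)}"
  show "F \<in> ?B" using assms(2) by blast
  show "derivatives_in S ?B G" if "G \<in> ?B" for G
  proof -
    have "(G has_derivative (\<lambda>v. \<chi> i. frechet_derivative (\<lambda>x. G x $ i) (at x) v)) (at x)"
      if "x \<in> S" for x
    proof (rule has_derivative_vec_lambda)
      show "((\<lambda>x. G x $ i) has_derivative frechet_derivative (\<lambda>x. G x $ i) (at x)) (at x)" for i
        using \<open>G \<in> ?B\<close> that smooth_on_differentiable frechet_derivative_works by blast
    qed
    then show ?thesis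
      using \<open>G \<in> ?B\<close>
      by (intro derivatives_inI[where f'="\<lambda>x v. \<chi> i. frechet_derivative (\<lambda>x. G x $ i) (at x) v"])
        (auto intro: smooth_on_frechet_derivative)
  qed
qed simp

lemma smooth_on_scaleR:
  fixes F :: "'a::real_normed_vector \<Rightarrow> real^'n"
  assumes "open S" "smooth_on S c" "smooth_on S F"
  shows "smooth_on S (\<lambda>x. c x *\<^sub>R F x)"
proof (rule smooth_on_vec[OF assms(1)])
  fix i
  have "smooth_on S (\<lambda>x. c x * F x $ i)"
    using assms by (intro smooth_on_mult smooth_on_vec_nth)
  then show "smooth_on S (\<lambda>x. (c x *\<^sub>R F x) $ i)" by simp
qed

lemma smooth_on_norm_powr:
  fixes F :: "'a::real_normed_vector \<Rightarrow> 'b::euclidean_space"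
  assumes "open S" "smooth_on S F" "\<And>x. x \<in> S \<Longrightarrow> F x \<noteq> 0"
  shows "smooth_on S (\<lambda>x. norm (F x) powr r)"
proof -
  define N where "N x = (\<Sum>b\<in>Basis. (F x \<bullet> b) * (F x \<bullet> b))" for x
  have N: "N x = norm (F x) ^ 2" for x
    unfolding N_def by (simp add: power2_norm_eq_inner flip: euclidean_inner)
  have "smooth_on S (\<lambda>x. F x \<bullet> b)" for b
    using smooth_on_bounded_linear_compose[OF assms(1) bounded_linear_inner_left assms(2)] by simp
  then have "smooth_on S N"
    unfolding N_def using assms(1) by (intro smooth_on_sum smooth_on_mult finite_Basis)
  moreover have "N x > 0" if "x \<in> S" for x
    using assms(3)[OF that] by (simp add: N)
  ultimately have "smooth_on S (\<lambda>x. N x powr (r / 2))"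
    by (rule smooth_on_powr[OF assms(1)])
  moreover have "norm (F x) powr r = N x powr (r / 2)" for x
  proof -
    have "N x = norm (F x) powr 2" by (simp add: N)
    then show ?thesis by (simp only: powr_powr) simp
  qed
  ultimately show ?thesis by simp
qed

lemma smooth_on_grad:
  assumes "open S" "smooth_on S f"
  shows "smooth_on S (grad f)"
proof (rule smooth_on_vec[OF assms(1)])
  show "smooth_on S (\<lambda>x. grad f x $ i)" for i
    unfolding grad_def vec_lambda_beta by (rule smooth_on_frechet_derivative[OF assms(2)])
qed

section \<open>Gradients of positively homogeneous functions\<close>

lemma pos_homogeneous1_scaleR:
  "pos_homogeneous1 f \<Longrightarrow> t > 0 \<Longrightarrow> x \<noteq> 0 \<Longrightarrow> f (t *\<^sub>R x) = t * f x"
  by (simp add: pos_homogeneous1_def)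

lemma frechet_derivative_eq_inner_grad:
  fixes f :: "real^'n \<Rightarrow> real"
  assumes "f differentiable (at x)"
  shows "frechet_derivative f (at x) v = grad f x \<bullet> v"
proof -
  have "frechet_derivative f (at x) v = frechet_derivative f (at x) (\<Sum>i\<in>UNIV. v $ i *\<^sub>R axis i 1)"
    using basis_expansion[of v] by (simp add: scalar_mult_eq_scaleR)
  also have "\<dots> = (\<Sum>i\<in>UNIV. v $ i * frechet_derivative f (at x) (axis i 1))"
    using linear_frechet_derivative[OF assms] by (simp add: linear_sum linear_scale)
  also have "\<dots> = grad f x \<bullet> v"
    by (simp add: grad_def inner_vec_def mult.commute)
  finally show ?thesis .
qed

lemma has_derivative_grad:
  fixes f :: "real^'n \<Rightarrow> real"
  assumes "f differentiable (at x)"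
  shows "(f has_derivative (\<lambda>v. grad f x \<bullet> v)) (at x)"
  using assms frechet_derivative_works[of f "at x"]
  by (simp add: frechet_derivative_eq_inner_grad[OF assms, symmetric])

lemma euler_homogeneous:
  fixes f :: "real^'n \<Rightarrow> real"
  assumes hom: "pos_homogeneous1 f" and "f differentiable (at x)" "x \<noteq> 0"
  shows "grad f x \<bullet> x = f x"
proof -
  have ray: "((\<lambda>s::real. x + s *\<^sub>R x) has_derivative (\<lambda>s. s *\<^sub>R x)) (at 0)"
    by (auto intro!: derivative_eq_intros)
  have "(f has_derivative (\<lambda>v. grad f x \<bullet> v)) (at (x + 0 *\<^sub>R x))"
    using has_derivative_grad[OF assms(2)] by simp
  from has_derivative_compose[OF ray this]
  have "((\<lambda>s. f (x + s *\<^sub>R x)) has_derivative (\<lambda>s. s * (grad f x \<bullet> x))) (at 0)"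
    by simp
  moreover have "((\<lambda>s::real. (1 + s) * f x) has_derivative (\<lambda>s. s * f x)) (at 0)"
    by (auto intro!: derivative_eq_intros)
  then have "((\<lambda>s. f (x + s *\<^sub>R x)) has_derivative (\<lambda>s. s * f x)) (at 0)"
  proof (rule has_derivative_transform_within_open[where s="{-1<..}"])
    show "(1 + s) * f x = f (x + s *\<^sub>R x)" if "s \<in> {-1<..}" for s
    proof -
      have "x + s *\<^sub>R x = (1 + s) *\<^sub>R x" by (simp add: algebra_simps)
      then show ?thesis
        using pos_homogeneous1_scaleR[OF hom _ \<open>x \<noteq> 0\<close>, of "1 + s"] that by simp
    qed
  qed auto
  ultimately have "(\<lambda>s. s * (grad f x \<bullet> x)) = (\<lambda>s. s * f x)"
    by (rule has_derivative_unique)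
  then show ?thesis
    by (metis mult_1)
qed

lemma grad_scaleR:
  fixes f :: "real^'n \<Rightarrow> real"
  assumes hom: "pos_homogeneous1 f" and diff: "\<And>y. y \<noteq> 0 \<Longrightarrow> f differentiable (at y)"
    and "x \<noteq> 0" "t > 0"
  shows "grad f (t *\<^sub>R x) = grad f x"
proof -
  have scale: "((\<lambda>y. t *\<^sub>R y) has_derivative (\<lambda>v. t *\<^sub>R v)) (at x)"
    by (rule bounded_linear_imp_has_derivative[OF bounded_linear_scaleR_right])
  have "(f has_derivative (\<lambda>v. grad f (t *\<^sub>R x) \<bullet> v)) (at (t *\<^sub>R x))"
    using has_derivative_grad[OF diff] assms(3,4) by simp
  from has_derivative_compose[OF scale this]
  have "((\<lambda>y. f (t *\<^sub>R y)) has_derivative (\<lambda>v. t * (grad f (t *\<^sub>R x) \<bullet> v))) (at x)"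
    by simp
  moreover have "((\<lambda>y. t * f y) has_derivative (\<lambda>v. t * (grad f x \<bullet> v))) (at x)"
    using has_derivative_grad[OF diff[OF assms(3)]] by (auto intro!: derivative_eq_intros)
  then have "((\<lambda>y. f (t *\<^sub>R y)) has_derivative (\<lambda>v. t * (grad f x \<bullet> v))) (at x)"
  proof (rule has_derivative_transform_within_open[where s="-{0}"])
    show "t * f y = f (t *\<^sub>R y)" if "y \<in> -{0}" for y
      using pos_homogeneous1_scaleR[OF hom assms(4), of y] that by simp
  qed (use assms(3) in auto)
  ultimately have "(\<lambda>v. t * (grad f (t *\<^sub>R x) \<bullet> v)) = (\<lambda>v. t * (grad f x \<bullet> v))"
    by (rule has_derivative_unique)
  then have "\<forall>v. grad f (t *\<^sub>R x) \<bullet> v = grad f x \<bullet> v"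
    using assms(4) by (simp add: fun_eq_iff)
  then show ?thesis
    by (simp add: vector_eq_rdot)
qed

lemma hessian_eq_frechet_derivative_grad:
  assumes "grad f differentiable (at x)"
  shows "hessian f x $ i $ j = frechet_derivative (grad f) (at x) (axis j 1) $ i"
proof -
  have "((\<lambda>y. grad f y $ i) has_derivative (\<lambda>v. frechet_derivative (grad f) (at x) v $ i)) (at x)"
    using bounded_linear.has_derivative[OF bounded_linear_vec_nth] assms
    by (simp add: frechet_derivative_works)
  then show ?thesis
    by (simp add: hessian_def flip: frechet_derivative_at)
qed

text \<open>Differentiate Euler's relation grad f y \<bullet> y = f y.\<close>

lemma inner_frechet_derivative_grad_homogeneous:
  fixes f :: "real^'n \<Rightarrow> real"
  assumes hom: "pos_homogeneous1 f" and diff: "\<And>y. y \<noteq> 0 \<Longrightarrow> f differentiable (at y)"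
    and "grad f differentiable (at x)" "x \<noteq> 0"
  shows "x \<bullet> frechet_derivative (grad f) (at x) v = 0"
proof -
  let ?G' = "frechet_derivative (grad f) (at x)"
  have "((\<lambda>y. grad f y \<bullet> y) has_derivative (\<lambda>v. grad f x \<bullet> v + ?G' v \<bullet> x)) (at x)"
    using assms(3) by (auto intro!: derivative_eq_intros simp: frechet_derivative_works)
  then have "(f has_derivative (\<lambda>v. grad f x \<bullet> v + ?G' v \<bullet> x)) (at x)"
  proof (rule has_derivative_transform_within_open[where s="-{0}"])
    show "grad f y \<bullet> y = f y" if "y \<in> -{0}" for y
      using euler_homogeneous[OF hom diff] that by auto
  qed (use assms(4) in auto)
  moreover have "(f has_derivative (\<lambda>v. grad f x \<bullet> v)) (at x)"
    using has_derivative_grad[OF diff[OF assms(4)]] .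
  ultimately have "(\<lambda>v. grad f x \<bullet> v + ?G' v \<bullet> x) = (\<lambda>v. grad f x \<bullet> v)"
    by (rule has_derivative_unique)
  then show ?thesis
    by (simp add: fun_eq_iff inner_commute)
qed

lemma inner_grad_frechet_derivative_const:
  fixes q :: "real^'n \<Rightarrow> real"
  assumes "open S" "x \<in> S" "\<And>y. y \<in> S \<Longrightarrow> q (G y) = c"
    and "G differentiable (at x)" "q differentiable (at (G x))"
  shows "grad q (G x) \<bullet> frechet_derivative G (at x) v = 0"
proof -
  have "((\<lambda>y. q (G y)) has_derivative (\<lambda>v. grad q (G x) \<bullet> frechet_derivative G (at x) v)) (at x)"
  proof (rule has_derivative_compose[of G _ x UNIV q])
    show "(G has_derivative frechet_derivative G (at x)) (at x)"
      using assms(4) frechet_derivative_works by blast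
  qed (rule has_derivative_grad[OF assms(5)])
  moreover have "((\<lambda>y. q (G y)) has_derivative (\<lambda>v. 0)) (at x)"
    by (rule has_derivative_transform_within_open[OF has_derivative_const assms(1,2)])
      (use assms(3) in auto)
  ultimately have "(\<lambda>v. grad q (G x) \<bullet> frechet_derivative G (at x) v) = (\<lambda>v. 0)"
    by (rule has_derivative_unique)
  then show ?thesis
    by (simp add: fun_eq_iff)
qed

lemma det_eq_0_if_vector_matrix_mult_eq_0:
  fixes A :: "real^'m^'m"
  assumes "z \<noteq> 0" "z v* A = 0"
  shows "det A = 0"
proof (rule ccontr)
  assume "det A \<noteq> 0"
  then obtain B where "B ** transpose A = mat 1"
    by (metis det_transpose invertible_det_nz invertible_def)
  moreover have "transpose A *v z = 0" using assms(2) by simp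
  ultimately show False
    using assms(1) matrix_left_invertible_ker by blast
qed

lemma sum_UNIV_option:
  "(\<Sum>a\<in>UNIV. f a) = f None + (\<Sum>i\<in>UNIV. f (Some i))"
  for f :: "'n::finite option \<Rightarrow> 'b::comm_monoid_add"
  by (simp add: UNIV_option_conv sum.reindex)

text \<open>The vector (w, 0) lies in the left kernel of the bordered Hessian.\<close>

lemma det_bordered_hessian_eq_0:
  fixes F :: "real^'n \<Rightarrow> real"
  assumes "w \<noteq> 0" "grad F x \<bullet> w = 0" "w v* hessian F x = 0"
  shows "det (bordered_hessian F x) = 0"
proof (rule det_eq_0_if_vector_matrix_mult_eq_0)
  define z :: "real^'n option" where "z = (\<chi> a. case a of Some i \<Rightarrow> w $ i | None \<Rightarrow> 0)"
  show "z \<noteq> 0"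
  proof
    assume "z = 0"
    then have "w $ i = 0" for i
      by (metis (no_types, lifting) option.simps(5) vec_lambda_beta zero_index z_def)
    then show False
      using assms(1) by (simp add: vec_eq_iff)
  qed
  have "(z v* bordered_hessian F x) $ a = 0" for a
  proof (cases a)
    case None
    then show ?thesis
      using assms(2)
      by (simp add: vector_matrix_mult_def sum_UNIV_option z_def bordered_hessian_def inner_vec_def mult.commute)
  next
    case (Some j)
    then show ?thesis
      using arg_cong[OF assms(3), of "\<lambda>u. u $ j"]
      by (simp add: vector_matrix_mult_def sum_UNIV_option z_def bordered_hessian_def)
  qed
  then show "z v* bordered_hessian F x = 0"
    by (simp add: vec_eq_iff)
qed

section \<open>Dual gauges\<close>

locale dual_gauges =
  fixes p pstar :: "real^'n \<Rightarrow> real"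
  assumes p_smooth: "smooth_on (- {0}) p"
    and p_pos: "\<forall>\<xi>. \<xi> \<noteq> 0 \<longrightarrow> p \<xi> > 0"
    and p_hom: "pos_homogeneous1 p"
    and p_curv: "\<forall>\<xi>. \<xi> \<noteq> 0 \<and> p \<xi> = 1 \<longrightarrow> level_gauss_curvature p \<xi> \<noteq> 0"
    and ps_smooth: "smooth_on (- {0}) pstar"
    and ps_pos: "\<forall>\<xi>. \<xi> \<noteq> 0 \<longrightarrow> pstar \<xi> > 0"
    and ps_hom: "pos_homogeneous1 pstar"
    and ps_dual: "{\<eta>. \<eta> \<noteq> 0 \<and> pstar \<eta> = 1} = {grad p \<xi> | \<xi>. \<xi> \<noteq> 0 \<and> p \<xi> = 1}"
begin

definition psi :: "real^'n \<Rightarrow> real^'n" where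
  "psi \<xi> = p \<xi> *\<^sub>R (grad p \<xi> /\<^sub>R norm (grad p \<xi>))"

definition phi :: "real^'n \<Rightarrow> real^'n" where
  "phi \<eta> = norm \<eta> *\<^sub>R grad pstar \<eta>"

lemma p_differentiable: "\<xi> \<noteq> 0 \<Longrightarrow> p differentiable (at \<xi>)"
  using smooth_on_differentiable[OF p_smooth] by simp

lemma pstar_differentiable: "\<eta> \<noteq> 0 \<Longrightarrow> pstar differentiable (at \<eta>)"
  using smooth_on_differentiable[OF ps_smooth] by simp

lemma grad_p_differentiable: "\<xi> \<noteq> 0 \<Longrightarrow> grad p differentiable (at \<xi>)"
  using smooth_on_differentiable[OF smooth_on_grad[OF open_Compl[OF closed_singleton] p_smooth]]
  by simp

lemma grad_p_normalize:
  assumes "\<xi> \<noteq> 0"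
  shows "\<xi> /\<^sub>R p \<xi> \<noteq> 0" "p (\<xi> /\<^sub>R p \<xi>) = 1" "grad p (\<xi> /\<^sub>R p \<xi>) = grad p \<xi>"
proof -
  have "p \<xi> > 0" using p_pos assms by blast
  then show "\<xi> /\<^sub>R p \<xi> \<noteq> 0" "p (\<xi> /\<^sub>R p \<xi>) = 1"
    using pos_homogeneous1_scaleR[OF p_hom, of "inverse (p \<xi>)" \<xi>] assms by auto
  show "grad p (\<xi> /\<^sub>R p \<xi>) = grad p \<xi>"
    using grad_scaleR[OF p_hom p_differentiable assms] \<open>p \<xi> > 0\<close> by simp
qed

lemma grad_p_nonzero: "\<xi> \<noteq> 0 \<Longrightarrow> grad p \<xi> \<noteq> 0"
  and pstar_grad_p: "\<xi> \<noteq> 0 \<Longrightarrow> pstar (grad p \<xi>) = 1"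
  using ps_dual grad_p_normalize[of \<xi>] by (metis (mono_tags, lifting) mem_Collect_eq)+

lemma grad_pstar_grad_p_level:
  assumes "\<xi> \<noteq> 0" "p \<xi> = 1"
  shows "grad pstar (grad p \<xi>) = \<xi>"
proof (rule ccontr)
  let ?g = "grad p \<xi>" and ?G' = "frechet_derivative (grad p) (at \<xi>)"
  define w where "w = grad pstar ?g - \<xi>"
  assume "grad pstar ?g \<noteq> \<xi>"
  then have "w \<noteq> 0" by (simp add: w_def)
  moreover have "grad p \<xi> \<bullet> w = 0"
  proof -
    have "grad pstar ?g \<bullet> ?g = 1"
      using euler_homogeneous[OF ps_hom pstar_differentiable grad_p_nonzero] pstar_grad_p assms(1)
      by (simp add: grad_p_nonzero)
    moreover have "grad p \<xi> \<bullet> \<xi> = 1"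
      using euler_homogeneous[OF p_hom p_differentiable assms(1)] assms by simp
    ultimately show ?thesis
      by (simp add: w_def inner_diff_right inner_commute)
  qed
  moreover have "w v* hessian p \<xi> = 0"
  proof -
    have "grad pstar ?g \<bullet> ?G' v = 0" for v
      using inner_grad_frechet_derivative_const[where S="-{0}" and G="grad p" and q=pstar and c=1] assms(1)
        grad_p_differentiable pstar_differentiable grad_p_nonzero pstar_grad_p
      by auto
    moreover have "\<xi> \<bullet> ?G' v = 0" for v
      using inner_frechet_derivative_grad_homogeneous[OF p_hom p_differentiable
          grad_p_differentiable assms(1)] assms(1) by blast
    ultimately have "w \<bullet> ?G' v = 0" for v
      by (simp add: w_def inner_diff_left)
    then show ?thesis
      using hessian_eq_frechet_derivative_grad[OF grad_p_differentiable[OF assms(1)]]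
      by (simp add: vec_eq_iff vector_matrix_mult_def inner_vec_def)
  qed
  ultimately have "det (bordered_hessian p \<xi>) = 0"
    by (rule det_bordered_hessian_eq_0)
  then show False
    using p_curv assms by (simp add: level_gauss_curvature_def)
qed

lemma grad_pstar_grad_p:
  assumes "\<xi> \<noteq> 0"
  shows "grad pstar (grad p \<xi>) = \<xi> /\<^sub>R p \<xi>"
  using grad_pstar_grad_p_level[OF grad_p_normalize(1,2)] grad_p_normalize(3) assms by simp

lemma psi_eq_scaleR_grad: "psi \<xi> = (p \<xi> / norm (grad p \<xi>)) *\<^sub>R grad p \<xi>"
  by (simp add: psi_def divide_inverse_commute)

lemma psi_nonzero:
  assumes "\<xi> \<noteq> 0"
  shows "psi \<xi> \<noteq> 0"
  using p_pos[rule_format, OF assms] grad_p_nonzero[OF assms] by (simp add: psi_def)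

lemma phi_psi:
  assumes "\<xi> \<noteq> 0"
  shows "phi (psi \<xi>) = \<xi>"
proof -
  define t where "t = p \<xi> / norm (grad p \<xi>)"
  have "p \<xi> > 0" "grad p \<xi> \<noteq> 0"
    using p_pos grad_p_nonzero assms by auto
  then have "t > 0" by (simp add: t_def)
  have "psi \<xi> = t *\<^sub>R grad p \<xi>" by (simp add: psi_eq_scaleR_grad t_def)
  moreover have "norm (t *\<^sub>R grad p \<xi>) = p \<xi>"
    using \<open>p \<xi> > 0\<close> \<open>grad p \<xi> \<noteq> 0\<close> by (simp add: t_def)
  moreover have "grad pstar (t *\<^sub>R grad p \<xi>) = \<xi> /\<^sub>R p \<xi>"
    using grad_scaleR[OF ps_hom pstar_differentiable \<open>grad p \<xi> \<noteq> 0\<close> \<open>t > 0\<close>]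
      grad_pstar_grad_p[OF assms] by simp
  ultimately show ?thesis
    using \<open>p \<xi> > 0\<close> by (simp add: phi_def)
qed

lemma psi_surj:
  assumes "\<eta> \<noteq> 0"
  obtains \<xi> where "\<xi> \<noteq> 0" "psi \<xi> = \<eta>"
proof -
  have "pstar \<eta> > 0" using ps_pos assms by blast
  then have "pstar (\<eta> /\<^sub>R pstar \<eta>) = 1"
    using pos_homogeneous1_scaleR[OF ps_hom, of "inverse (pstar \<eta>)" \<eta>] assms by simp
  moreover have "\<eta> /\<^sub>R pstar \<eta> \<noteq> 0"
    using \<open>pstar \<eta> > 0\<close> assms by simp
  ultimately have "\<eta> /\<^sub>R pstar \<eta> \<in> {grad p \<xi> | \<xi>. \<xi> \<noteq> 0 \<and> p \<xi> = 1}"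
    unfolding ps_dual[symmetric] by simp
  then obtain \<zeta> where \<zeta>: "\<zeta> \<noteq> 0" "p \<zeta> = 1" "grad p \<zeta> = \<eta> /\<^sub>R pstar \<eta>"
    by force
  define t where "t = norm \<eta>"
  have "t > 0" using assms by (simp add: t_def)
  have "p (t *\<^sub>R \<zeta>) = t"
    using pos_homogeneous1_scaleR[OF p_hom \<open>t > 0\<close> \<zeta>(1)] \<zeta>(2) by simp
  moreover have "grad p (t *\<^sub>R \<zeta>) = \<eta> /\<^sub>R pstar \<eta>"
    using grad_scaleR[OF p_hom p_differentiable \<zeta>(1) \<open>t > 0\<close>] \<zeta>(3) by simp
  ultimately have "psi (t *\<^sub>R \<zeta>) = (t / norm (\<eta> /\<^sub>R pstar \<eta>)) *\<^sub>R (\<eta> /\<^sub>R pstar \<eta>)"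
    by (simp only: psi_eq_scaleR_grad)
  also have "\<dots> = \<eta>"
    using \<open>pstar \<eta> > 0\<close> \<open>t > 0\<close> by (simp add: t_def)
  finally have "psi (t *\<^sub>R \<zeta>) = \<eta>" .
  moreover have "t *\<^sub>R \<zeta> \<noteq> 0" using \<zeta>(1) \<open>t > 0\<close> by simp
  ultimately show ?thesis using that by blast
qed

lemma
  assumes "\<eta> \<noteq> 0"
  shows psi_phi: "psi (phi \<eta>) = \<eta>" and phi_nonzero: "phi \<eta> \<noteq> 0"
proof -
  obtain \<xi> where "\<xi> \<noteq> 0" "psi \<xi> = \<eta>" using psi_surj[OF assms] .
  moreover from this have "phi \<eta> = \<xi>" using phi_psi by force
  ultimately show "psi (phi \<eta>) = \<eta>" "phi \<eta> \<noteq> 0" by simp_all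
qed

lemma bij_betw_psi: "bij_betw psi (- {0}) (- {0})"
proof (rule bij_betw_byWitness[where f'=phi])
  show "\<forall>\<xi>\<in>- {0}. phi (psi \<xi>) = \<xi>" by (simp add: phi_psi)
  show "\<forall>\<eta>\<in>- {0}. psi (phi \<eta>) = \<eta>" by (simp add: psi_phi)
  show "psi ` (- {0}) \<subseteq> - {0}" by (rule image_subsetI) (simp add: psi_nonzero)
  show "phi ` (- {0}) \<subseteq> - {0}" by (rule image_subsetI) (simp add: phi_nonzero)
qed

lemma inv_into_psi:
  assumes "\<eta> \<noteq> 0"
  shows "inv_into (- {0}) psi \<eta> = phi \<eta>"
proof -
  have "phi \<eta> \<in> - {0}" "psi (phi \<eta>) = \<eta>"
    using psi_phi[OF assms] phi_nonzero[OF assms] by auto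
  then show ?thesis
    by (rule inv_into_f_eq[OF bij_betw_imp_inj_on[OF bij_betw_psi]])
qed

lemma smooth_on_psi: "smooth_on (- {0}) psi"
proof -
  have "open (- {0} :: (real^'n) set)" by auto
  moreover have "smooth_on (- {0}) (\<lambda>\<xi>. (p \<xi> * norm (grad p \<xi>) powr -1) *\<^sub>R grad p \<xi>)"
    using \<open>open (- {0})\<close> p_smooth smooth_on_grad[OF _ p_smooth] grad_p_nonzero
    by (intro smooth_on_scaleR smooth_on_mult smooth_on_norm_powr) auto
  moreover have "psi \<xi> = (p \<xi> * norm (grad p \<xi>) powr -1) *\<^sub>R grad p \<xi>" if "\<xi> \<in> - {0}" for \<xi>
    using grad_p_nonzero that by (simp add: psi_eq_scaleR_grad powr_minus divide_inverse)
  ultimately show ?thesis by (rule smooth_on_transform)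
qed

lemma smooth_on_phi: "smooth_on (- {0}) phi"
proof -
  have "open (- {0} :: (real^'n) set)" by auto
  have "smooth_on (- {0}) (\<lambda>\<eta>::real^'n. norm \<eta> powr 1)"
    by (rule smooth_on_norm_powr[OF \<open>open (- {0})\<close> smooth_on_bounded_linear[OF _ bounded_linear_ident]])
      auto
  then have "smooth_on (- {0}) (\<lambda>\<eta>. norm \<eta> *\<^sub>R grad pstar \<eta>)"
    using \<open>open (- {0})\<close> ps_smooth by (auto intro!: smooth_on_scaleR smooth_on_grad)
  then show ?thesis
    by (simp add: phi_def[abs_def])
qed

lemma diffeo_on_psi: "diffeo_on (- {0}) (- {0}) psi"
proof -
  have "smooth_on (- {0}) (inv_into (- {0}) psi)"
    by (rule smooth_on_transform[OF _ smooth_on_phi]) (auto simp: inv_into_psi)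
  then show ?thesis
    using bij_betw_psi smooth_on_psi by (simp add: diffeo_on_def)
qed

end

theorem corollary8:
  fixes p pstar :: "real^'n \<Rightarrow> real"
  assumes n2: "CARD('n) \<ge> 2"
    and p_smooth: "smooth_on (- {0}) p"
    and p_pos: "\<forall>\<xi>. \<xi> \<noteq> 0 \<longrightarrow> p \<xi> > 0"
    and p_hom: "pos_homogeneous1 p"
    and p_curv: "\<forall>\<xi>. \<xi> \<noteq> 0 \<and> p \<xi> = 1 \<longrightarrow> level_gauss_curvature p \<xi> \<noteq> 0"
    and ps_smooth: "smooth_on (- {0}) pstar"
    and ps_pos: "\<forall>\<xi>. \<xi> \<noteq> 0 \<longrightarrow> pstar \<xi> > 0"
    and ps_hom: "pos_homogeneous1 pstar"
    and ps_dual: "{\<eta>. \<eta> \<noteq> 0 \<and> pstar \<eta> = 1} = {grad p \<xi> | \<xi>. \<xi> \<noteq> 0 \<and> p \<xi> = 1}"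
  defines "\<psi> \<equiv> (\<lambda>\<xi>. p \<xi> *\<^sub>R (grad p \<xi> /\<^sub>R norm (grad p \<xi>)))"
    and "\<phi> \<equiv> (\<lambda>\<xi>. norm \<xi> *\<^sub>R grad pstar \<xi>)"
  shows "diffeo_on (- {0}) (- {0}) \<psi> \<and> (\<forall>\<eta>\<in>- {0}. \<phi> \<eta> = inv_into (- {0}) \<psi> \<eta>)"
proof -
  interpret dual_gauges p pstar
    using p_smooth p_pos p_hom p_curv ps_smooth ps_pos ps_hom ps_dual by unfold_locales
  have "\<psi> = psi" "\<phi> = phi"
    by (simp_all add: \<psi>_def \<phi>_def psi_def[abs_def] phi_def[abs_def])
  then show ?thesis
    using diffeo_on_psi inv_into_psi by simp
qed

end
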